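(* For the two-species competition model on $\mathbb{Z}$ (i.e. $d=1$), for every nondegenerate finite initial configuration ($R(0)$, $B(0)$ finite, disjoint, both nonempty), the event $\{R(t)\ne\emptyset\text{ and }B(t)\ne\emptyset\text{ for all }t\ge0\}$ of mutual survival has positive probability.
   Context: The two-species competition model on $\mathbb{Z}^d$ is the continuous-time Markov process $(R(t),B(t))_{t\ge0}$ whose state is a pair of disjoint subsets of $\mathbb{Z}^d$ ($R(t)$: Red sites, $B(t)$: Blue sites; other sites unoccupied). An unoccupied site becomes Red at rate equal to its number of Red nearest neighbours and Blue at rate equal to its number of Blue nearest neighbours; an occupied site flips to the opposite colour at rate equal to its number of nearest neighbours of the opposite colour; occupied sites never become unoccupied. *)

theory Defs
  imports "HOL-Probability.Probability"
begin

text \<open>Two-species competition model on the integer lattice Z (d = 1).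
  A configuration is a pair (R, B) of disjoint finite sets of sites (Red, Blue).\<close>

type_synonym config = "int set \<times> int set"

definition nbrs :: "int \<Rightarrow> int set" where
  "nbrs x = {x - 1, x + 1}"

text \<open>Rate at which site x becomes Red: its number of Red neighbours (if it is
  not already Red; this covers unoccupied sites and Blue-to-Red flips). Same for Blue.\<close>
definition red_rate :: "config \<Rightarrow> int \<Rightarrow> nat" where
  "red_rate c x = (if x \<in> fst c then 0 else card (nbrs x \<inter> fst c))"

definition blue_rate :: "config \<Rightarrow> int \<Rightarrow> nat" where
  "blue_rate c x = (if x \<in> snd c then 0 else card (nbrs x \<inter> snd c))"

definition make_red :: "config \<Rightarrow> int \<Rightarrow> config" where
  "make_red c x = (insert x (fst c), snd c - {x})"

definition make_blue :: "config \<Rightarrow> int \<Rightarrow> config" where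
  "make_blue c x = (fst c - {x}, insert x (snd c))"

text \<open>Sites that can possibly change: neighbours of occupied sites (finite for
  finite configurations).\<close>
definition active_sites :: "config \<Rightarrow> int set" where
  "active_sites c = (\<Union>y \<in> fst c \<union> snd c. nbrs y)"

text \<open>Multiset of transitions, each target configuration counted with
  multiplicity equal to its (integer) rate.\<close>
definition moves :: "config \<Rightarrow> config multiset" where
  "moves c = (\<Sum>x \<in> active_sites c.
      replicate_mset (red_rate c x) (make_red c x) + replicate_mset (blue_rate c x) (make_blue c x))"

definition total_rate :: "config \<Rightarrow> nat" where
  "total_rate c = size (moves c)"

definition jump_kernel :: "config \<Rightarrow> config pmf" where
  "jump_kernel c = (if moves c = {#} then return_pmf c else pmf_of_multiset (moves c))"

text \<open>Standard (jump chain / holding time) description of the continuous-time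
  Markov chain started at c0: on a probability space M, Y n is the n-th visited
  state and S n the holding time in it.  The joint law of
  (Y 0, ..., Y n, S 0, ..., S (n-1)) is that of the jump chain with kernel
  jump_kernel, holding times being conditionally independent exponentials with
  rate total_rate (Y k).\<close>
definition is_competition_process ::
    "'w measure \<Rightarrow> config \<Rightarrow> (nat \<Rightarrow> 'w \<Rightarrow> config) \<Rightarrow> (nat \<Rightarrow> 'w \<Rightarrow> real) \<Rightarrow> bool" where
  "is_competition_process M c0 Y S \<longleftrightarrow>
     prob_space M \<and>
     (\<forall>n. Y n \<in> measurable M (count_space UNIV)) \<and>
     (\<forall>n. S n \<in> borel_measurable M) \<and>
     (\<forall>n (h :: nat \<Rightarrow> config) (s :: nat \<Rightarrow> real). (\<forall>k<n. 0 \<le> s k) \<longrightarrow>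
        measure M {w \<in> space M. (\<forall>k\<le>n. Y k w = h k) \<and> (\<forall>k<n. s k < S k w)} =
          (if h 0 = c0 then 1 else 0) *
          (\<Prod>k<n. pmf (jump_kernel (h k)) (h (Suc k)) * exp (- real (total_rate (h k)) * s k)))"

definition jump_time :: "(nat \<Rightarrow> 'w \<Rightarrow> real) \<Rightarrow> nat \<Rightarrow> 'w \<Rightarrow> real" where
  "jump_time S n w = (\<Sum>k<n. S k w)"

definition state_at :: "(nat \<Rightarrow> 'w \<Rightarrow> config) \<Rightarrow> (nat \<Rightarrow> 'w \<Rightarrow> real) \<Rightarrow> real \<Rightarrow> 'w \<Rightarrow> config \<Rightarrow> bool" where
  "state_at Y S t w c \<longleftrightarrow>
     (\<exists>n. jump_time S n w \<le> t \<and> t < jump_time S (Suc n) w \<and> Y n w = c)"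

text \<open>Mutual survival: at every time t \<ge> 0 (at which the process is defined)
  both colours are present.\<close>
definition mutual_survival ::
    "'w measure \<Rightarrow> (nat \<Rightarrow> 'w \<Rightarrow> config) \<Rightarrow> (nat \<Rightarrow> 'w \<Rightarrow> real) \<Rightarrow> 'w set" where
  "mutual_survival M Y S = {w \<in> space M. \<forall>t\<ge>0. \<forall>c. state_at Y S t w c \<longrightarrow>
       fst c \<noteq> {} \<and> snd c \<noteq> {}}"

end

theory Submission
  imports Defs
begin

text \<open>A Red interval of length \<open>r\<close> next to a Blue interval of length \<open>b\<close> has exactly four
  transitions, each of rate 1, leading to \<open>(r + 1, b)\<close>, \<open>(r + 1, b - 1)\<close>, \<open>(r - 1, b + 1)\<close> and
  \<open>(r, b + 1)\<close>.  The potential \<open>1 - 2^-r - 2^-b\<close> is harmonic for this walk, at most 1, and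
  non-positive once a colour has died out, so it bounds from below the probability that the jump
  chain keeps both colours during the next \<open>n\<close> steps, uniformly in \<open>n\<close>.  From any nondegenerate
  finite configuration, finitely many transitions (Red painting an interval to the left of one of
  its sites, then Blue painting the interval to its right) reach such an interface with \<open>r \<ge> 2\<close>,
  where the potential is positive.  Letting \<open>n \<rightarrow> \<infinity>\<close> gives coexistence at all jumps, hence at all
  times, with positive probability.\<close>

definition coexisting :: "config \<Rightarrow> bool" where
  "coexisting c \<longleftrightarrow> fst c \<noteq> {} \<and> snd c \<noteq> {}"

lemma coexisting_swap [simp]: "coexisting (prod.swap c) = coexisting c"
  by (auto simp: coexisting_def)

lemma sum_mset_eq_sum_count:
  "(\<Sum>x\<in>#M. f x) = (\<Sum>x\<in>set_mset M. of_nat (count M x) * (f x :: 'b :: comm_semiring_1))"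
proof (induction M)
  case empty
  then show ?case by simp
next
  case (add y M)
  have "(\<Sum>x\<in>set_mset (add_mset y M). of_nat (count (add_mset y M) x) * f x) =
        (\<Sum>x\<in>insert y (set_mset M). of_nat (count M x) * f x + (if x = y then f x else 0))"
    by (intro sum.cong) (auto simp: algebra_simps)
  also have "\<dots> = f y + (\<Sum>x\<in>set_mset M. of_nat (count M x) * f x)"
    by (simp add: sum.distrib not_in_iff insert_absorb sum.insert_if add.commute)
  finally show ?case using add by simp
qed

lemma sum_pmf_of_multiset:
  assumes "M \<noteq> {#}"
  shows "(\<Sum>x\<in>set_mset M. pmf (pmf_of_multiset M) x * f x) = (\<Sum>x\<in>#M. f x) / size M"
  using assms by (simp add: sum_mset_eq_sum_count sum_divide_distrib)

lemma image_mset_sum: "image_mset f (sum g A) = (\<Sum>x\<in>A. image_mset f (g x))"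
  by (induction A rule: infinite_finite_induct) auto

lemma moves_swap: "moves (prod.swap c) = image_mset prod.swap (moves c)"
proof -
  obtain R B where c: "c = (R, B)"
    by (cases c)
  have "active_sites (prod.swap c) = active_sites c"
    by (auto simp: c active_sites_def)
  then show ?thesis
    unfolding moves_def image_mset_sum
    by (intro sum.cong) (auto simp: c red_rate_def blue_rate_def make_red_def make_blue_def)
qed

lemma finite_active_sites: "finite (fst c) \<Longrightarrow> finite (snd c) \<Longrightarrow> finite (active_sites c)"
  by (auto simp: active_sites_def nbrs_def)

lemma make_red_in_moves:
  assumes "finite (fst c)" "finite (snd c)" "x \<notin> fst c" "x - 1 \<in> fst c \<or> x + 1 \<in> fst c"
  shows "make_red c x \<in># moves c"
proof -
  have "x \<in> active_sites c"
    using assms(4) by (force simp: active_sites_def nbrs_def)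
  moreover have "red_rate c x > 0"
    using assms(3,4) by (auto simp: red_rate_def nbrs_def card_gt_0_iff)
  ultimately have "make_red c x \<in> (\<Union>y\<in>active_sites c. set_mset
      (replicate_mset (red_rate c y) (make_red c y) + replicate_mset (blue_rate c y) (make_blue c y)))"
    by force
  then show ?thesis
    unfolding moves_def by (subst set_mset_sum) (auto simp: finite_active_sites assms(1,2))
qed

fun survival_prob :: "nat \<Rightarrow> config \<Rightarrow> real" where
  "survival_prob 0 c = (if coexisting c then 1 else 0)"
| "survival_prob (Suc n) c = (if coexisting c
     then (\<Sum>c'\<in>set_pmf (jump_kernel c). pmf (jump_kernel c) c' * survival_prob n c') else 0)"

lemma finite_set_jump_kernel: "finite (set_pmf (jump_kernel c))"
  by (auto simp: jump_kernel_def)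

lemma pmf_jump_kernel_pos: "c' \<in># moves c \<Longrightarrow> 0 < pmf (jump_kernel c) c'"
  by (auto simp: jump_kernel_def nonempty_has_size)

lemma survival_prob_nonneg: "0 \<le> survival_prob n c"
  by (induction n arbitrary: c) (auto intro!: sum_nonneg)

lemma survival_prob_Suc_le: "survival_prob (Suc n) c \<le> survival_prob n c"
proof (induction n arbitrary: c)
  case 0
  have "(\<Sum>c'\<in>set_pmf (jump_kernel c). pmf (jump_kernel c) c' * survival_prob 0 c')
      \<le> (\<Sum>c'\<in>set_pmf (jump_kernel c). pmf (jump_kernel c) c')"
    by (intro sum_mono) (simp add: mult_left_le)
  also have "\<dots> = 1"
    by (simp add: sum_pmf_eq_1 finite_set_jump_kernel)
  finally show ?case by simp
next
  case (Suc n)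
  then show ?case
    by (auto intro!: sum_mono mult_left_mono)
qed

lemma survival_prob_antimono: "n \<le> n' \<Longrightarrow> survival_prob n' c \<le> survival_prob n c"
  by (rule lift_Suc_antimono_le[of "\<lambda>n. survival_prob n c", OF survival_prob_Suc_le])

lemma survival_prob_Suc_ge:
  assumes "coexisting c" "c' \<in># moves c"
  shows "pmf (jump_kernel c) c' * survival_prob n c' \<le> survival_prob (Suc n) c"
proof -
  have "c' \<in> set_pmf (jump_kernel c)"
    using pmf_jump_kernel_pos[OF assms(2)] by (simp add: set_pmf_eq')
  then show ?thesis
    using assms(1) by (auto intro!: member_le_sum simp: survival_prob_nonneg finite_set_jump_kernel)
qed

inductive reaches :: "config \<Rightarrow> config \<Rightarrow> bool" where
  refl: "reaches c c"
| step: "coexisting c \<Longrightarrow> c' \<in># moves c \<Longrightarrow> reaches c' c'' \<Longrightarrow> reaches c c''"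

lemma reaches_trans: "reaches a b \<Longrightarrow> reaches b c \<Longrightarrow> reaches a c"
  by (induction rule: reaches.induct) (auto intro: reaches.step)

lemma reaches_swap: "reaches a b \<Longrightarrow> reaches (prod.swap a) (prod.swap b)"
proof (induction rule: reaches.induct)
  case (refl c)
  then show ?case by (rule reaches.refl)
next
  case (step c c' c'')
  have "prod.swap c' \<in># moves (prod.swap c)"
    using step.hyps(2) by (simp add: moves_swap)
  then show ?case
    using step by (auto intro: reaches.step)
qed

lemma reaches_imp_survival_prob_ge:
  "reaches c c' \<Longrightarrow> \<exists>p>0. \<exists>m. \<forall>n. p * survival_prob n c' \<le> survival_prob (n + m) c"
proof (induction rule: reaches.induct)
  case (refl c)
  have "1 * survival_prob n c \<le> survival_prob (n + 0) c" for n
    by simp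
  then show ?case
    using zero_less_one by blast
next
  case (step c c' c'')
  then obtain p m where p: "p > 0" "\<And>n. p * survival_prob n c'' \<le> survival_prob (n + m) c'"
    by blast
  define q where "q = pmf (jump_kernel c) c'"
  have q: "q > 0"
    unfolding q_def by (rule pmf_jump_kernel_pos[OF step.hyps(2)])
  have "q * p * survival_prob n c'' \<le> survival_prob (n + Suc m) c" for n
  proof -
    have "q * p * survival_prob n c'' \<le> q * survival_prob (n + m) c'"
      using p q by (simp add: mult.assoc)
    also have "\<dots> \<le> survival_prob (Suc (n + m)) c"
      unfolding q_def by (rule survival_prob_Suc_ge[OF step.hyps(1,2)])
    finally show ?thesis by simp
  qed
  moreover have "q * p > 0"
    using p q by simp
  ultimately show ?case
    by blast
qed

text \<open>Empty intervals are allowed, so that the potential below stays exactly harmonic at the moves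
  that wipe out a colour.\<close>
definition interface :: "config \<Rightarrow> bool" where
  "interface c \<longleftrightarrow> (\<exists>a m e::int. a \<le> m + 1 \<and> m \<le> e \<and>
      (c = ({a..m}, {m+1..e}) \<or> c = ({m+1..e}, {a..m})))"

definition interface_potential :: "config \<Rightarrow> real" where
  "interface_potential c =
     (if interface c then 1 - (1/2) ^ card (fst c) - (1/2) ^ card (snd c) else 0)"

lemma interface_swap [simp]: "interface (prod.swap c) = interface c"
  unfolding interface_def by (cases c) auto

lemma interface_potential_swap [simp]: "interface_potential (prod.swap c) = interface_potential c"
  unfolding interface_potential_def interface_swap by (simp add: algebra_simps)

lemma interface_potential_le_1: "interface_potential c \<le> 1"
proof (cases "interface c")
  case True
  have "0 \<le> (1/2::real) ^ card (fst c)" "0 \<le> (1/2::real) ^ card (snd c)"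
    by simp_all
  then show ?thesis
    unfolding interface_potential_def if_P[OF True] by linarith
qed (simp add: interface_potential_def)

lemma interface_potential_nonpos: "\<not> coexisting c \<Longrightarrow> interface_potential c \<le> 0"
  by (auto simp: interface_potential_def coexisting_def)

lemma interface_potential_interval:
  "a \<le> m + 1 \<Longrightarrow> m \<le> e \<Longrightarrow>
    interface_potential ({a..m}, {m+1..e}) = 1 - (1/2) ^ nat (m - a + 1) - (1/2) ^ nat (e - m)"
  unfolding interface_potential_def interface_def by auto

lemma card_nbrs_inter_interval:
  assumes "a \<le> m" "x \<notin> {a..m}"
  shows "card (nbrs x \<inter> {a..m}) = (if x = a - 1 \<or> x = m + 1 then 1 else 0)"
proof -
  have "nbrs x \<inter> {a..m} = (if x = a - 1 then {a} else if x = m + 1 then {m} else {})"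
    using assms by (auto simp: nbrs_def)
  then show ?thesis by simp
qed

lemma moves_interface:
  assumes "a \<le> m" "m < e"
  shows "moves ({a..m}, {m+1..e}) =
    {# ({a-1..m}, {m+1..e}), ({a..m+1}, {m+2..e}), ({a..m-1}, {m..e}), ({a..m}, {m+1..e+1}) #}"
proof -
  define c where "c = ({a..m}, {m+1..e})"
  define f where "f x = replicate_mset (red_rate c x) (make_red c x) +
    replicate_mset (blue_rate c x) (make_blue c x)" for x
  have red_rate: "red_rate c x = (if x = a - 1 \<or> x = m + 1 then 1 else 0)" for x
    using assms card_nbrs_inter_interval[of a m x] by (auto simp: red_rate_def c_def)
  have blue_rate: "blue_rate c x = (if x = m \<or> x = e + 1 then 1 else 0)" for x
    using assms card_nbrs_inter_interval[of "m + 1" e x] by (auto simp: blue_rate_def c_def)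
  have finite: "finite (active_sites c)"
    by (simp add: c_def finite_active_sites)
  have sites: "{a - 1, m + 1, m, e + 1} \<subseteq> active_sites c"
    using assms unfolding active_sites_def c_def nbrs_def by force
  have "moves c = sum f (active_sites c)"
    unfolding moves_def f_def ..
  also have "\<dots> = sum f {a - 1, m + 1, m, e + 1}"
    by (rule sum.mono_neutral_right[OF finite sites]) (auto simp: f_def red_rate blue_rate)
  also have "\<dots> = {# make_red c (a - 1), make_red c (m + 1), make_blue c m, make_blue c (e + 1) #}"
    using assms by (simp add: f_def red_rate blue_rate)
  finally have "moves c = {# make_red c (a - 1), make_red c (m + 1), make_blue c m, make_blue c (e + 1) #}" .
  moreover have "make_red c (a - 1) = ({a-1..m}, {m+1..e})" "make_red c (m + 1) = ({a..m+1}, {m+2..e})"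
    "make_blue c m = ({a..m-1}, {m..e})" "make_blue c (e + 1) = ({a..m}, {m+1..e+1})"
    using assms by (auto simp: make_red_def make_blue_def c_def)
  ultimately show ?thesis
    unfolding c_def by simp
qed

text \<open>The Red terms cancel because \<open>2^-(r+1) + 2^-(r+1) + 2^-(r-1) + 2^-r = 4 * 2^-r\<close>, and
  symmetrically for Blue.\<close>
lemma interface_potential_harmonic_interval:
  assumes "a \<le> m" "m < e"
  shows "(\<Sum>x\<in>#moves ({a..m}, {m+1..e}). interface_potential x) =
    4 * interface_potential ({a..m}, {m+1..e})"
proof -
  define r where "r = nat (m - a)"
  define b where "b = nat (e - m - 1)"
  have "m - a = int r" "e - m - 1 = int b"
    using assms by (simp_all add: r_def b_def)
  then have "nat (m - a + 1) = Suc r" "nat (e - m) = Suc b"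
    "nat (m - (a - 1) + 1) = Suc (Suc r)" "nat (e - (m + 1)) = b" "nat (m + 1 - a + 1) = Suc (Suc r)"
    "nat (m - 1 - a + 1) = r" "nat (e - (m - 1)) = Suc (Suc b)" "nat (e + 1 - m) = Suc (Suc b)"
    by auto
  then have potentials:
    "interface_potential ({a..m}, {m+1..e}) = 1 - (1/2) ^ Suc r - (1/2) ^ Suc b"
    "interface_potential ({a-1..m}, {m+1..e}) = 1 - (1/2) ^ Suc (Suc r) - (1/2) ^ Suc b"
    "interface_potential ({a..m+1}, {m+2..e}) = 1 - (1/2) ^ Suc (Suc r) - (1/2) ^ b"
    "interface_potential ({a..m-1}, {m..e}) = 1 - (1/2) ^ r - (1/2) ^ Suc (Suc b)"
    "interface_potential ({a..m}, {m+1..e+1}) = 1 - (1/2) ^ Suc r - (1/2) ^ Suc (Suc b)"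
    using assms interface_potential_interval[of a m e] interface_potential_interval[of "a - 1" m e]
      interface_potential_interval[of a "m + 1" e] interface_potential_interval[of a "m - 1" e]
      interface_potential_interval[of a m "e + 1"]
    by (simp_all add: add.assoc)
  have "(\<Sum>x\<in>#moves ({a..m}, {m+1..e}). interface_potential x) =
      interface_potential ({a-1..m}, {m+1..e}) + interface_potential ({a..m+1}, {m+2..e}) +
      interface_potential ({a..m-1}, {m..e}) + interface_potential ({a..m}, {m+1..e+1})"
    by (simp add: moves_interface[OF assms] add.assoc)
  then show ?thesis
    unfolding potentials by (simp add: algebra_simps)
qed

lemma interface_potential_harmonic:
  assumes "coexisting c" "interface c"
  shows "size (moves c) = 4 \<and> (\<Sum>x\<in>#moves c. interface_potential x) = 4 * interface_potential c"
proof -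
  obtain a m e where "a \<le> m + 1" "m \<le> e"
    and c: "c = ({a..m}, {m+1..e}) \<or> c = prod.swap ({a..m}, {m+1..e})"
    using assms(2) unfolding interface_def by auto
  moreover from this have am: "a \<le> m" "m < e"
    using assms(1) by (auto simp: coexisting_def)
  define c0 where "c0 = ({a..m}, {m+1..e})"
  have "size (moves c0) = 4" "(\<Sum>x\<in>#moves c0. interface_potential x) = 4 * interface_potential c0"
    unfolding c0_def using interface_potential_harmonic_interval[OF am]
    by (simp_all add: moves_interface[OF am])
  moreover have "(\<Sum>x\<in>#moves (prod.swap c0). interface_potential x) =
      (\<Sum>x\<in>#moves c0. interface_potential x)"
    by (simp add: moves_swap multiset.map_comp comp_def)
  ultimately show ?thesis
    using c unfolding c0_def[symmetric] by (auto simp: moves_swap)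
qed

lemma interface_potential_le_survival_prob: "interface_potential c \<le> survival_prob n c"
proof (induction n arbitrary: c)
  case 0
  then show ?case
    using interface_potential_le_1 interface_potential_nonpos[of c] by auto
next
  case (Suc n)
  show ?case
  proof (cases "coexisting c \<and> interface c")
    case False
    then show ?thesis
      using interface_potential_nonpos[of c] survival_prob_nonneg[of "Suc n" c]
      by (auto simp: interface_potential_def)
  next
    case True
    then have size: "size (moves c) = 4"
      and harmonic: "(\<Sum>x\<in>#moves c. interface_potential x) = 4 * interface_potential c"
      using interface_potential_harmonic by auto
    then have "moves c \<noteq> {#}"
      by auto
    then have "survival_prob (Suc n) c =
        (\<Sum>x\<in>set_mset (moves c). pmf (pmf_of_multiset (moves c)) x * survival_prob n x)"
      using True by (simp add: jump_kernel_def)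
    also have "\<dots> = (\<Sum>x\<in>#moves c. survival_prob n x) / 4"
      using sum_pmf_of_multiset[OF \<open>moves c \<noteq> {#}\<close>] size by simp
    moreover have "(\<Sum>x\<in>#moves c. interface_potential x) \<le> (\<Sum>x\<in>#moves c. survival_prob n x)"
      by (rule sum_mset_mono) (rule Suc.IH)
    ultimately show ?thesis
      using harmonic by simp
  qed
qed

lemma reaches_make_red:
  assumes "finite (fst c)" "finite (snd c)" "fst c \<inter> snd c = {}" "coexisting c"
    and "x - 1 \<in> fst c \<or> x + 1 \<in> fst c"
  shows "reaches c (make_red c x)"
proof (cases "x \<in> fst c")
  case True
  then have "make_red c x = c"
    using assms(3) by (cases c) (auto simp: make_red_def)
  then show ?thesis
    by (simp add: reaches.refl)
next
  case False
  then show ?thesis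
    using assms make_red_in_moves by (blast intro: reaches.intros)
qed

lemma reaches_paint_red_insert:
  assumes "finite R" "finite B" "R \<inter> B = {}" "reaches (R, B) (R \<union> {a..b}, B - {a..b})"
    and "a \<le> b" "\<not> B \<subseteq> {a..b}" "x - 1 \<in> {a..b} \<or> x + 1 \<in> {a..b}"
  shows "reaches (R, B) (R \<union> insert x {a..b}, B - insert x {a..b})"
proof -
  let ?c = "(R \<union> {a..b}, B - {a..b})"
  have "coexisting ?c"
    using assms(5,6) by (auto simp: coexisting_def)
  then have "reaches ?c (make_red ?c x)"
    by (rule reaches_make_red[rotated 3]) (use assms(1-3,7) in auto)
  also have "make_red ?c x = (R \<union> insert x {a..b}, B - insert x {a..b})"
    by (auto simp: make_red_def)
  finally show ?thesis
    using assms(4) by (rule reaches_trans[rotated])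
qed

text \<open>Red spreads from \<open>p\<close> one site at a time; the Blue site outside \<open>{a..b}\<close> keeps every
  intermediate configuration coexisting.\<close>
lemma reaches_paint_red:
  assumes "finite R" "finite B" "R \<inter> B = {}" "p \<in> R" "a \<le> p" "p \<le> b" "\<not> B \<subseteq> {a..b}"
  shows "reaches (R, B) (R \<union> {a..b}, B - {a..b})"
  using assms(5-7)
proof (induction "nat (b - a)" arbitrary: a b)
  case 0
  then have "a = p" "b = p"
    by auto
  then have "(R \<union> {a..b}, B - {a..b}) = (R, B)"
    using assms(3,4) by auto
  then show ?case
    by (simp add: reaches.refl)
next
  case (Suc n)
  show ?case
  proof (cases "a < p")
    case True
    have "{a+1..b} \<subseteq> {a..b}"
      by simp
    then have outside: "\<not> B \<subseteq> {a+1..b}"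
      using Suc.prems(3) by blast
    then have "reaches (R, B) (R \<union> {a+1..b}, B - {a+1..b})"
      using Suc.hyps(2) Suc.prems(2) True by (intro Suc.hyps(1)) auto
    then have "reaches (R, B) (R \<union> insert a {a+1..b}, B - insert a {a+1..b})"
      by (rule reaches_paint_red_insert[OF assms(1-3) _ _ outside]) (use Suc.prems True in auto)
    moreover have "insert a {a+1..b} = {a..b}"
      using Suc.prems True by auto
    ultimately show ?thesis
      by simp
  next
    case False
    have "{a..b-1} \<subseteq> {a..b}"
      by simp
    then have outside: "\<not> B \<subseteq> {a..b-1}"
      using Suc.prems(3) by blast
    then have "reaches (R, B) (R \<union> {a..b-1}, B - {a..b-1})"
      using Suc.hyps(2) Suc.prems(1) False by (intro Suc.hyps(1)) auto
    then have "reaches (R, B) (R \<union> insert b {a..b-1}, B - insert b {a..b-1})"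
      by (rule reaches_paint_red_insert[OF assms(1-3) _ _ outside]) (use Suc.hyps(2) Suc.prems False in auto)
    moreover have "insert b {a..b-1} = {a..b}"
      using Suc.hyps(2) Suc.prems False by auto
    ultimately show ?thesis
      by simp
  qed
qed

lemma reaches_paint_blue:
  assumes "finite R" "finite B" "R \<inter> B = {}" "q \<in> B" "a \<le> q" "q \<le> b" "\<not> R \<subseteq> {a..b}"
  shows "reaches (R, B) (R - {a..b}, B \<union> {a..b})"
proof -
  have "reaches (B, R) (B \<union> {a..b}, R - {a..b})"
    using assms by (intro reaches_paint_red) auto
  then show ?thesis
    using reaches_swap by fastforce
qed

lemma reaches_positive_potential_ordered:
  assumes "finite R" "finite B" "R \<inter> B = {}" "p \<in> R" "q \<in> B" "p < q"
  shows "\<exists>c. reaches (R, B) c \<and> interface_potential c > 0"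
proof -
  obtain k where k: "abs ` (R \<union> B) \<subseteq> {..k}"
    using assms(1,2) finite_int_iff_bounded_le by (metis finite_UnI)
  define L where "L = - k - 1"
  have bounds: "R \<union> B \<subseteq> {L<..k}"
    using k by (force simp: L_def)
  have "reaches (R, B) (R \<union> {L..p}, B - {L..p})"
    using assms bounds by (intro reaches_paint_red) auto
  moreover have "reaches (R \<union> {L..p}, B - {L..p}) ((R \<union> {L..p}) - {p+1..k}, (B - {L..p}) \<union> {p+1..k})"
    using assms bounds by (intro reaches_paint_blue) auto
  moreover have "(R \<union> {L..p}) - {p+1..k} = {L..p}" "(B - {L..p}) \<union> {p+1..k} = {p+1..k}"
    using assms bounds by auto
  ultimately have "reaches (R, B) ({L..p}, {p+1..k})"
    by (metis reaches_trans)
  moreover have "interface_potential ({L..p}, {p+1..k}) > 0"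
  proof -
    have "L < p" "p < k"
      using assms bounds by auto
    then have "(1/2::real) ^ nat (p - L + 1) \<le> (1/2) ^ 2" "(1/2::real) ^ nat (k - p) \<le> (1/2) ^ 1"
      by (intro power_decreasing; simp)+
    moreover have "interface_potential ({L..p}, {p+1..k}) = 1 - (1/2) ^ nat (p - L + 1) - (1/2) ^ nat (k - p)"
      using \<open>L < p\<close> \<open>p < k\<close> by (simp add: interface_potential_interval)
    ultimately show ?thesis
      unfolding power2_eq_square power_one_right by linarith
  qed
  ultimately show ?thesis
    by blast
qed

lemma reaches_positive_potential:
  assumes "finite R" "finite B" "R \<inter> B = {}" "R \<noteq> {}" "B \<noteq> {}"
  shows "\<exists>c. reaches (R, B) c \<and> interface_potential c > 0"
proof -
  obtain p q where "p \<in> R" "q \<in> B" "p \<noteq> q"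
    using assms(3-5) by blast
  then consider "p < q" | "q < p"
    by linarith
  then show ?thesis
  proof cases
    case 1
    then show ?thesis
      using reaches_positive_potential_ordered assms(1-3) \<open>p \<in> R\<close> \<open>q \<in> B\<close> by blast
  next
    case 2
    then obtain c where "reaches (B, R) c" "interface_potential c > 0"
      using reaches_positive_potential_ordered[of B R q p] assms(1-3) \<open>p \<in> R\<close> \<open>q \<in> B\<close> by blast
    then have "reaches (R, B) (prod.swap c)" "interface_potential (prod.swap c) > 0"
      using reaches_swap[of "(B, R)" c] by auto
    then show ?thesis
      by blast
  qed
qed

lemma survival_prob_uniform_lower_bound:
  assumes "finite R" "finite B" "R \<inter> B = {}" "R \<noteq> {}" "B \<noteq> {}"
  shows "\<exists>\<delta>>0. \<forall>n. \<delta> \<le> survival_prob n (R, B)"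
proof -
  obtain c where reach: "reaches (R, B) c" and pos: "interface_potential c > 0"
    using reaches_positive_potential[OF assms] by blast
  obtain p m where "p > 0" and p: "\<And>n. p * survival_prob n c \<le> survival_prob (n + m) (R, B)"
    using reaches_imp_survival_prob_ge[OF reach] by blast
  have "p * interface_potential c \<le> survival_prob n (R, B)" for n
  proof -
    have "p * interface_potential c \<le> p * survival_prob n c"
      using \<open>p > 0\<close> interface_potential_le_survival_prob by simp
    also have "\<dots> \<le> survival_prob (n + m) (R, B)"
      by (rule p)
    also have "\<dots> \<le> survival_prob n (R, B)"
      by (rule survival_prob_antimono) simp
    finally show ?thesis .
  qed
  moreover have "p * interface_potential c > 0"
    using \<open>p > 0\<close> pos by simp
  ultimately show ?thesis
    by blast
qed

definition path_prob :: "config \<Rightarrow> nat \<Rightarrow> (nat \<Rightarrow> config) \<Rightarrow> real" where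
  "path_prob c0 n h = (if h 0 = c0 then 1 else 0) * (\<Prod>k<n. pmf (jump_kernel (h k)) (h (Suc k)))"

lemma path_prob_fun_upd_Suc:
  "path_prob c0 (Suc n) (h(Suc n := c')) = path_prob c0 n h * pmf (jump_kernel (h n)) c'"
proof -
  have "(\<Prod>k<n. pmf (jump_kernel ((h(Suc n := c')) k)) ((h(Suc n := c')) (Suc k))) =
        (\<Prod>k<n. pmf (jump_kernel (h k)) (h (Suc k)))"
    by (intro prod.cong) auto
  then show ?thesis
    unfolding path_prob_def by (simp add: algebra_simps)
qed

text \<open>The holding times are required to be positive because the law of the process is given
  only on events of the form \<open>S k > s k\<close>; here \<open>s k = 0\<close>.\<close>
definition path_coexistence_event ::
    "'w measure \<Rightarrow> (nat \<Rightarrow> 'w \<Rightarrow> config) \<Rightarrow> (nat \<Rightarrow> 'w \<Rightarrow> real) \<Rightarrow>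
      nat \<Rightarrow> nat \<Rightarrow> (nat \<Rightarrow> config) \<Rightarrow> 'w set" where
  "path_coexistence_event M Y S n m h = {w \<in> space M. (\<forall>k\<le>n. Y k w = h k) \<and>
      (\<forall>k<n+m. 0 < S k w) \<and> (\<forall>k. n \<le> k \<and> k \<le> n + m \<longrightarrow> coexisting (Y k w))}"

lemma competition_process_measurable:
  assumes "is_competition_process M c0 Y S"
  shows "Measurable.pred M (\<lambda>w. P (Y n w))" and "S n \<in> borel_measurable M"
proof -
  have "Y n \<in> measurable M (count_space UNIV)" "S n \<in> borel_measurable M"
    using assms unfolding is_competition_process_def by blast+
  then show "Measurable.pred M (\<lambda>w. P (Y n w))" "S n \<in> borel_measurable M"
    by (simp_all add: measurable_compose[OF _ measurable_count_space])
qed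

lemma sets_path_coexistence_event:
  assumes "is_competition_process M c0 Y S"
  shows "path_coexistence_event M Y S n m h \<in> sets M"
  using competition_process_measurable[OF assms, measurable]
  unfolding path_coexistence_event_def by measurable

lemma path_coexistence_event_Suc_subset:
  assumes "coexisting (h n)"
  shows "path_coexistence_event M Y S (Suc n) m (h(Suc n := c')) \<subseteq> path_coexistence_event M Y S n (Suc m) h"
proof
  fix w
  assume w: "w \<in> path_coexistence_event M Y S (Suc n) m (h(Suc n := c'))"
  then have "coexisting (Y k w)" if "n \<le> k" "k \<le> n + Suc m" for k
    using assms that unfolding path_coexistence_event_def by (cases "k = n") auto
  with w show "w \<in> path_coexistence_event M Y S n (Suc m) h"
    unfolding path_coexistence_event_def by auto
qed

lemma measure_path_coexistence_event_ge:
  assumes "is_competition_process M c0 Y S"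
  shows "path_prob c0 n h * survival_prob m (h n) \<le> measure M (path_coexistence_event M Y S n m h)"
proof (induction m arbitrary: n h)
  case 0
  have law: "measure M {w \<in> space M. (\<forall>k\<le>n. Y k w = h k) \<and> (\<forall>k<n. 0 < S k w)} = path_prob c0 n h"
    using assms unfolding is_competition_process_def path_prob_def by auto
  show ?case
  proof (cases "coexisting (h n)")
    case True
    then have "path_coexistence_event M Y S n 0 h =
        {w \<in> space M. (\<forall>k\<le>n. Y k w = h k) \<and> (\<forall>k<n. 0 < S k w)}"
      unfolding path_coexistence_event_def by auto
    then show ?thesis
      using True law by simp
  qed (simp add: measure_nonneg)
next
  case (Suc m)
  show ?case
  proof (cases "coexisting (h n)")
    case True
    interpret prob_space M
      using assms unfolding is_competition_process_def by blast
    define K where "K = jump_kernel (h n)"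
    define A where "A c' = path_coexistence_event M Y S (Suc n) m (h(Suc n := c'))" for c'
    have IH: "path_prob c0 (Suc n) (h(Suc n := c')) * survival_prob m c' \<le> measure M (A c')" for c'
      using Suc.IH[of "Suc n" "h(Suc n := c')"] unfolding A_def fun_upd_same .
    have disjoint: "disjoint_family_on A (set_pmf K)"
      unfolding disjoint_family_on_def A_def path_coexistence_event_def by auto
    have "path_prob c0 n h * survival_prob (Suc m) (h n) =
        (\<Sum>c'\<in>set_pmf K. path_prob c0 (Suc n) (h(Suc n := c')) * survival_prob m c')"
      using True by (simp add: K_def path_prob_fun_upd_Suc sum_distrib_left algebra_simps)
    also have "\<dots> \<le> (\<Sum>c'\<in>set_pmf K. measure M (A c'))"
      by (rule sum_mono) (rule IH)
    also have "\<dots> = measure M (\<Union>c'\<in>set_pmf K. A c')"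
      using disjoint finite_set_jump_kernel sets_path_coexistence_event[OF assms]
      unfolding A_def K_def by (intro finite_measure_finite_Union[symmetric]) auto
    also have "\<dots> \<le> measure M (path_coexistence_event M Y S n (Suc m) h)"
    proof (rule finite_measure_mono)
      show "(\<Union>c'\<in>set_pmf K. A c') \<subseteq> path_coexistence_event M Y S n (Suc m) h"
        unfolding A_def by (intro UN_least path_coexistence_event_Suc_subset True)
    qed (rule sets_path_coexistence_event[OF assms])
    finally show ?thesis .
  qed (simp add: measure_nonneg)
qed

lemma survival_prob_le_measure:
  assumes "is_competition_process M c0 Y S"
  shows "survival_prob n c0 \<le> measure M {w \<in> space M. \<forall>k\<le>n. coexisting (Y k w)}"
proof -
  interpret prob_space M
    using assms unfolding is_competition_process_def by blast
  have "survival_prob n c0 \<le> measure M (path_coexistence_event M Y S 0 n (\<lambda>_. c0))"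
    using measure_path_coexistence_event_ge[OF assms, of 0 "\<lambda>_. c0" n] by (simp add: path_prob_def)
  also have "\<dots> \<le> measure M {w \<in> space M. \<forall>k\<le>n. coexisting (Y k w)}"
    using competition_process_measurable[OF assms, measurable]
    by (intro finite_measure_mono) (auto simp: path_coexistence_event_def)
  finally show ?thesis .
qed

lemma mutual_survival_eq:
  "mutual_survival M Y S = {w \<in> space M.
     \<forall>n. max 0 (jump_time S n w) < jump_time S (Suc n) w \<longrightarrow> coexisting (Y n w)}"
proof -
  have "(\<exists>t\<ge>0. a \<le> t \<and> t < b) \<longleftrightarrow> max 0 a < b" for a b :: real
    by (auto intro: exI[of _ "max 0 a"])
  then show ?thesis
    unfolding mutual_survival_def state_at_def coexisting_def by blast
qed

lemma measure_mutual_survival_ge: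
  assumes process: "is_competition_process M c0 Y S" and bound: "\<And>n. \<delta> \<le> survival_prob n c0"
  shows "\<delta> \<le> measure M (mutual_survival M Y S)"
proof -
  interpret prob_space M
    using process unfolding is_competition_process_def by blast
  note [measurable] = competition_process_measurable[OF process]
  define E where "E n = {w \<in> space M. \<forall>k\<le>n. coexisting (Y k w)}" for n
  have "range E \<subseteq> sets M"
    unfolding E_def by auto
  moreover have "decseq E"
    unfolding decseq_def E_def by auto
  ultimately have "(\<lambda>n. measure M (E n)) \<longlonglongrightarrow> measure M (\<Inter>n. E n)"
    by (rule finite_Lim_measure_decseq)
  moreover have "\<delta> \<le> measure M (E n)" for n
    using bound[of n] survival_prob_le_measure[OF process, of n] unfolding E_def by linarith
  ultimately have "\<delta> \<le> measure M (\<Inter>n. E n)"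
    by (intro LIMSEQ_le_const) auto
  also have "\<dots> \<le> measure M (mutual_survival M Y S)"
  proof (rule finite_measure_mono)
    show "(\<Inter>n. E n) \<subseteq> mutual_survival M Y S"
      unfolding mutual_survival_eq E_def by auto
    show "mutual_survival M Y S \<in> sets M"
      unfolding mutual_survival_eq jump_time_def by measurable
  qed
  finally show ?thesis .
qed

theorem mainTheorem2:
  fixes M :: "'w measure" and R0 B0 :: "int set"
    and Y :: "nat \<Rightarrow> 'w \<Rightarrow> config" and S :: "nat \<Rightarrow> 'w \<Rightarrow> real"
  assumes "finite R0" and "finite B0" and "R0 \<inter> B0 = {}"
    and "R0 \<noteq> {}" and "B0 \<noteq> {}"
    and "is_competition_process M (R0, B0) Y S"
  shows "measure M (mutual_survival M Y S) > 0"
proof -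
  obtain \<delta> where "\<delta> > 0" and "\<And>n. \<delta> \<le> survival_prob n (R0, B0)"
    using survival_prob_uniform_lower_bound[OF assms(1-5)] by blast
  then show ?thesis
    using measure_mutual_survival_ge[OF assms(6)] by fastforce
qed

end
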